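(* Let $(S^d,T^d)_{d\in\{1,\dots,D\}}$ be period counters for $N$ workers and $D$ days. Then $T^1=0$ and for all $1\le d\le D-1$: $S^d\le S^{d+1}$, $\;T^d\le T^{d+1}$, $\;T^{d+1}\le S^d$, and $\;S^{d+1}\le T^d+N$.
   Context: A schedule for $N$ workers on $D$ days is any map $f:\{n_1,\dots,n_N\}\times\{1,\dots,D\}\to\{\mathrm{ON},\mathrm{OFF}\}$. A work period of a worker is an inclusion-wise maximal set of consecutive days on which the worker is ON. Integers $(S^d,T^d)_{d\in\{1,\dots,D\}}$ are called period counters if there exists some schedule for $N$ workers on $D$ days such that for each $d$, $S^d$ is the number of work periods (over all workers) whose first day is among days $1,\dots,d$, and $T^d$ is the number of work periods whose last day is among days $1,\dots,d-1$; the counters are then said to represent that schedule. *)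

theory Defs
  imports Main
begin

text \<open>A schedule for N workers (indexed 1..N) on D days (1..D) is a map
  f :: worker => day => bool (True = ON); only values on {1..N} x {1..D} matter.\<close>

type_synonym schedule = "nat \<Rightarrow> nat \<Rightarrow> bool"

definition on_block :: "schedule \<Rightarrow> nat \<Rightarrow> nat \<Rightarrow> nat set \<Rightarrow> bool" where
  "on_block f D n P \<longleftrightarrow>
     P \<noteq> {} \<and> (\<exists>a b. P = {a..b}) \<and> P \<subseteq> {1..D} \<and> (\<forall>d\<in>P. f n d)"

definition work_period :: "schedule \<Rightarrow> nat \<Rightarrow> nat \<Rightarrow> nat set \<Rightarrow> bool" where
  "work_period f D n P \<longleftrightarrow>
     on_block f D n P \<and> (\<forall>Q. on_block f D n Q \<and> P \<subseteq> Q \<longrightarrow> Q = P)"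

definition work_periods :: "schedule \<Rightarrow> nat \<Rightarrow> nat \<Rightarrow> (nat \<times> nat set) set" where
  "work_periods f N D = {(n, P). n \<in> {1..N} \<and> work_period f D n P}"

definition period_counters ::
  "nat \<Rightarrow> nat \<Rightarrow> (nat \<Rightarrow> int) \<Rightarrow> (nat \<Rightarrow> int) \<Rightarrow> bool" where
  "period_counters N D S T \<longleftrightarrow>
     (\<exists>f :: schedule. \<forall>d\<in>{1..D}.
        S d = int (card {(n, P) \<in> work_periods f N D. Min P \<in> {1..d}}) \<and>
        T d = int (card {(n, P) \<in> work_periods f N D. Max P \<in> {1..d-1}}))"

end

theory Submission
  imports Defs
begin

text \<open>The counters are cardinalities of the sets of work periods started by day d
  and ended before day d, so the first three inequalities are monotonicity and
  \<open>Min P \<le> Max P\<close>. For the last one, a period started by day d+1 either ended before day d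
  or is active on day d or starts on day d+1. Two such periods of the same worker overlap or
  touch, so their union is an ON block and maximality forces them to be equal; hence there are
  at most N of them.\<close>

definition started_by :: "schedule \<Rightarrow> nat \<Rightarrow> nat \<Rightarrow> nat \<Rightarrow> (nat \<times> nat set) set" where
  "started_by f N D d = {(n, P) \<in> work_periods f N D. Min P \<in> {1..d}}"

definition ended_before :: "schedule \<Rightarrow> nat \<Rightarrow> nat \<Rightarrow> nat \<Rightarrow> (nat \<times> nat set) set" where
  "ended_before f N D d = {(n, P) \<in> work_periods f N D. Max P \<in> {1..d-1}}"

lemma Min_atLeastAtMost_nat: "(a::nat) \<le> b \<Longrightarrow> Min {a..b} = a"
  by (rule Min_eqI) auto

lemma Max_atLeastAtMost_nat: "(a::nat) \<le> b \<Longrightarrow> Max {a..b} = b"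
  by (rule Max_eqI) auto

lemma work_period_on_block: "work_period f D n P \<Longrightarrow> on_block f D n P"
  unfolding work_period_def by blast

lemma work_period_maximal:
  "work_period f D n P \<Longrightarrow> on_block f D n Q \<Longrightarrow> P \<subseteq> Q \<Longrightarrow> Q = P"
  unfolding work_period_def by blast

lemma work_period_interval:
  assumes "work_period f D n P"
  shows "P = {Min P..Max P}" "1 \<le> Min P" "Min P \<le> Max P" "Max P \<le> D"
proof -
  from assms have "on_block f D n P" by (rule work_period_on_block)
  then obtain a b where "P = {a..b}" "a \<le> b" "P \<subseteq> {1..D}"
    unfolding on_block_def by fastforce
  then show "P = {Min P..Max P}" "1 \<le> Min P" "Min P \<le> Max P" "Max P \<le> D"
    by (auto simp: Min_atLeastAtMost_nat Max_atLeastAtMost_nat)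
qed

lemma finite_work_periods: "finite (work_periods f N D)"
proof (rule finite_subset)
  show "work_periods f N D \<subseteq> {1..N} \<times> Pow {1..D}"
    unfolding work_periods_def by (auto dest!: work_period_on_block simp: on_block_def)
qed simp

lemma finite_started_by [simp]: "finite (started_by f N D d)"
  unfolding started_by_def by (rule finite_subset[OF _ finite_work_periods]) auto

lemma finite_ended_before [simp]: "finite (ended_before f N D d)"
  unfolding ended_before_def by (rule finite_subset[OF _ finite_work_periods]) auto

lemma work_periods_touching_eq:
  assumes P: "work_period f D n P" and Q: "work_period f D n Q"
    and "Min P \<le> Max Q + 1" and "Min Q \<le> Max P + 1"
  shows "P = Q"
proof -
  note P_ivl = work_period_interval[OF P] and Q_ivl = work_period_interval[OF Q]
  have "{Min P..Max P} \<union> {Min Q..Max Q} = {min (Min P) (Min Q)..max (Max P) (Max Q)}"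
    using assms(3,4) P_ivl(3) Q_ivl(3) by auto
  then have "P \<union> Q = {min (Min P) (Min Q)..max (Max P) (Max Q)}"
    by (simp only: P_ivl(1)[symmetric] Q_ivl(1)[symmetric])
  moreover have "\<forall>x \<in> P \<union> Q. f n x"
    using P Q by (auto dest!: work_period_on_block simp: on_block_def)
  ultimately have "on_block f D n (P \<union> Q)"
    using P_ivl Q_ivl unfolding on_block_def by auto
  then have "P \<union> Q = P" and "P \<union> Q = Q"
    using work_period_maximal[OF P] work_period_maximal[OF Q] by blast+
  then show ?thesis by simp
qed

lemma card_periods_touching_day_le:
  "card {(n, P) \<in> work_periods f N D. Min P \<le> d + 1 \<and> d \<le> Max P} \<le> N"
  (is "card ?A \<le> N")
proof -
  have "inj_on fst ?A"
  proof (rule inj_onI)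
    fix x y
    assume "x \<in> ?A" "y \<in> ?A" "fst x = fst y"
    then obtain n P Q where xy: "x = (n, P)" "y = (n, Q)"
      and "work_period f D n P" "work_period f D n Q"
      and "Min P \<le> d + 1" "d \<le> Max P" "Min Q \<le> d + 1" "d \<le> Max Q"
      unfolding work_periods_def by (cases x, cases y) auto
    then have "P = Q"
      using work_periods_touching_eq by simp
    then show "x = y"
      using xy by simp
  qed
  moreover have "fst ` ?A \<subseteq> {1..N}"
    unfolding work_periods_def by auto
  ultimately have "card ?A \<le> card {1..N}"
    by (rule card_inj_on_le) auto
  then show ?thesis by simp
qed

lemma ended_before_1: "ended_before f N D 1 = {}"
  unfolding ended_before_def by simp

lemma card_started_by_mono:
  "d \<le> d' \<Longrightarrow> card (started_by f N D d) \<le> card (started_by f N D d')"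
  by (rule card_mono[OF finite_started_by]) (auto simp: started_by_def)

lemma card_ended_before_mono:
  "d \<le> d' \<Longrightarrow> card (ended_before f N D d) \<le> card (ended_before f N D d')"
  by (rule card_mono[OF finite_ended_before]) (auto simp: ended_before_def)

lemma card_ended_before_Suc_le_started_by:
  "card (ended_before f N D (d + 1)) \<le> card (started_by f N D d)"
  by (rule card_mono[OF finite_started_by])
    (auto simp: ended_before_def started_by_def work_periods_def dest: work_period_interval)

lemma card_started_by_Suc_le:
  assumes "1 \<le> d"
  shows "card (started_by f N D (d + 1)) \<le> card (ended_before f N D d) + N"
proof -
  define A where "A = {(n, P) \<in> work_periods f N D. Min P \<le> d + 1 \<and> d \<le> Max P}"
  have "started_by f N D (d + 1) \<subseteq> ended_before f N D d \<union> A"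
    using assms unfolding started_by_def ended_before_def A_def work_periods_def
    by (auto dest: work_period_interval)
  then have "card (started_by f N D (d + 1)) \<le> card (ended_before f N D d \<union> A)"
    by (rule card_mono[rotated])
      (auto simp: A_def intro: finite_subset[OF _ finite_work_periods])
  also have "\<dots> \<le> card (ended_before f N D d) + card A"
    by (rule card_Un_le)
  also have "card A \<le> N"
    unfolding A_def by (rule card_periods_touching_day_le)
  finally show ?thesis by simp
qed

theorem lemma5p4:
  fixes N D :: nat and S T :: "nat \<Rightarrow> int"
  assumes "period_counters N D S T"
  shows "(1 \<le> D \<longrightarrow> T 1 = 0) \<and>
         (\<forall>d. 1 \<le> d \<and> d \<le> D - 1 \<longrightarrow>
            S d \<le> S (d+1) \<and> T d \<le> T (d+1) \<and> T (d+1) \<le> S d \<and> S (d+1) \<le> T d + int N)"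
proof -
  obtain f where counts: "\<And>d. d \<in> {1..D} \<Longrightarrow>
      S d = int (card (started_by f N D d)) \<and> T d = int (card (ended_before f N D d))"
    using assms unfolding period_counters_def started_by_def ended_before_def by blast
  have "T 1 = 0" if "1 \<le> D"
    using counts[of 1] that unfolding ended_before_1 by simp
  moreover have "S d \<le> S (d+1) \<and> T d \<le> T (d+1) \<and> T (d+1) \<le> S d \<and> S (d+1) \<le> T d + int N"
    if "1 \<le> d" "d \<le> D - 1" for d
    using counts[of d] counts[of "d + 1"] that
      card_started_by_mono[of d "d + 1" f N D] card_ended_before_mono[of d "d + 1" f N D]
      card_ended_before_Suc_le_started_by[of f N D d] card_started_by_Suc_le[of d f N D]
    by auto
  ultimately show ?thesis by blast
qed

end
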